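(* Two proper subspaces $W_1,W_2$ of $\mathbb{R}^N$ do norm retrieval if and only if they are orthogonal complements of each other, i.e. $W_2=W_1^\perp$.
   Context: A family of subspaces $\{W_i\}_{i=1}^M$ of $\mathbb{R}^N$ with orthogonal projections $\{P_i\}_{i=1}^M$ does norm retrieval if for all $x,y\in\mathbb{R}^N$, $\|P_ix\|=\|P_iy\|$ for all $i\in\{1,\dots,M\}$ implies $\|x\|=\|y\|$. A proper subspace is a subspace different from $\mathbb{R}^N$. *)

theory Defs
  imports "HOL-Analysis.Analysis"
begin

definition orth_proj :: "'a::euclidean_space set \<Rightarrow> 'a \<Rightarrow> 'a" where
  "orth_proj W x = (THE p. p \<in> W \<and> x - p \<in> orthogonal_comp W)"

definition norm_retrieval :: "'i set \<Rightarrow> ('i \<Rightarrow> 'a::euclidean_space set) \<Rightarrow> bool" where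
  "norm_retrieval I W \<longleftrightarrow>
     (\<forall>x y. (\<forall>i\<in>I. norm (orth_proj (W i) x) = norm (orth_proj (W i) y)) \<longrightarrow> norm x = norm y)"

end

theory Submission
  imports Defs
begin

text \<open>Norm retrieval by two proper subspaces \<open>U\<close>, \<open>V\<close> is equivalent to the Pythagorean
  identity \<open>\<parallel>x\<parallel>\<^sup>2 = \<parallel>P\<^sub>U x\<parallel>\<^sup>2 + \<parallel>P\<^sub>V x\<parallel>\<^sup>2\<close>, which in turn holds exactly when \<open>V = U\<^sup>\<bottom>\<close>.
  For the hard implication, take \<open>a \<in> U\<^sup>\<bottom>\<close> and \<open>b \<in> V\<^sup>\<bottom>\<close>: the vectors \<open>a + b\<close> and \<open>a - b\<close>
  have projections of equal norms, so norm retrieval forces \<open>\<parallel>a + b\<parallel> = \<parallel>a - b\<parallel>\<close>, i.e. \<open>a \<bottom> b\<close>.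
  Hence for unit vectors \<open>v \<in> U\<^sup>\<bottom> \<subseteq> V\<close> and \<open>w \<in> V\<^sup>\<bottom> \<subseteq> U\<close> (they exist because the subspaces
  are proper), the vector \<open>\<parallel>P\<^sub>V x\<parallel> v + \<parallel>P\<^sub>U x\<parallel> w\<close> has the same projection norms as \<open>x\<close>, and
  its squared norm is \<open>\<parallel>P\<^sub>U x\<parallel>\<^sup>2 + \<parallel>P\<^sub>V x\<parallel>\<^sup>2\<close>.\<close>

lemma orth_proj_unique:
  fixes W :: "'a::euclidean_space set"
  assumes "subspace W" "p \<in> W" "x - p \<in> W\<^sup>\<bottom>"
  shows "orth_proj W x = p"
  unfolding orth_proj_def
proof (rule the_equality)
  show "p \<in> W \<and> x - p \<in> W\<^sup>\<bottom>"
    using assms(2,3) ..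
  fix q
  assume q: "q \<in> W \<and> x - q \<in> W\<^sup>\<bottom>"
  have "(x - p) - (x - q) \<in> W\<^sup>\<bottom>"
    using q subspace_diff[OF subspace_orthogonal_comp assms(3)] by blast
  then have "q - p \<in> W\<^sup>\<bottom>"
    by simp
  moreover have "q - p \<in> W"
    using assms(1,2) q by (simp add: subspace_diff)
  ultimately have "q - p \<in> W \<inter> W\<^sup>\<bottom>"
    by simp
  then show "q = p"
    using orthogonal_Int_0[OF assms(1)] by simp
qed

lemma
  fixes W :: "'a::euclidean_space set"
  assumes "subspace W"
  shows orth_proj_in: "orth_proj W x \<in> W"
    and orth_proj_residual: "x - orth_proj W x \<in> W\<^sup>\<bottom>"
proof -
  obtain p q where "x = p + q" "p \<in> W" "q \<in> W\<^sup>\<bottom>"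
    using subspace_sum_orthogonal_comp[OF assms] set_plus_elim by blast
  then have "orth_proj W x = p"
    using orth_proj_unique[OF assms] by simp
  with \<open>x = p + q\<close> \<open>p \<in> W\<close> \<open>q \<in> W\<^sup>\<bottom>\<close>
  show "orth_proj W x \<in> W" "x - orth_proj W x \<in> W\<^sup>\<bottom>"
    by simp_all
qed

lemma orth_proj_eq_self:
  fixes W :: "'a::euclidean_space set"
  assumes "subspace W" "x \<in> W"
  shows "orth_proj W x = x"
  using assms by (simp add: orth_proj_unique subspace_0 subspace_orthogonal_comp)

lemma orth_proj_eq_0_iff:
  fixes W :: "'a::euclidean_space set"
  assumes "subspace W"
  shows "orth_proj W x = 0 \<longleftrightarrow> x \<in> W\<^sup>\<bottom>"
  using orth_proj_residual[OF assms, of x] orth_proj_unique[OF assms subspace_0[OF assms], of x]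
  by auto

lemma linear_orth_proj:
  fixes W :: "'a::euclidean_space set"
  assumes "subspace W"
  shows "linear (orth_proj W)"
proof (rule linearI)
  let ?P = "orth_proj W"
  fix x y :: 'a and c :: real
  have "?P x + ?P y \<in> W"
    by (simp add: assms orth_proj_in subspace_add)
  moreover have "(x - ?P x) + (y - ?P y) \<in> W\<^sup>\<bottom>"
    by (simp add: assms orth_proj_residual subspace_add subspace_orthogonal_comp)
  ultimately show "?P (x + y) = ?P x + ?P y"
    by (intro orth_proj_unique[OF assms]) (simp_all add: algebra_simps)
  have "c *\<^sub>R ?P x \<in> W"
    by (simp add: assms orth_proj_in subspace_scale)
  moreover have "c *\<^sub>R (x - ?P x) \<in> W\<^sup>\<bottom>"
    by (simp add: assms orth_proj_residual subspace_scale subspace_orthogonal_comp)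
  ultimately show "?P (c *\<^sub>R x) = c *\<^sub>R ?P x"
    by (intro orth_proj_unique[OF assms]) (simp_all add: algebra_simps)
qed

lemma norm_orth_proj_Pythagorean:
  fixes W :: "'a::euclidean_space set"
  assumes "subspace W"
  shows "(norm x)\<^sup>2 = (norm (orth_proj W x))\<^sup>2 + (norm (x - orth_proj W x))\<^sup>2"
proof -
  have "orthogonal (orth_proj W x) (x - orth_proj W x)"
    using orth_proj_in[OF assms] orth_proj_residual[OF assms]
    by (simp add: orthogonal_comp_def)
  then show ?thesis
    using norm_add_Pythagorean by fastforce
qed

lemma orth_proj_orthogonal_comp:
  fixes W :: "'a::euclidean_space set"
  assumes "subspace W"
  shows "orth_proj (W\<^sup>\<bottom>) x = x - orth_proj W x"
proof (rule orth_proj_unique[OF subspace_orthogonal_comp])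
  show "x - orth_proj W x \<in> W\<^sup>\<bottom>"
    by (rule orth_proj_residual[OF assms])
  show "x - (x - orth_proj W x) \<in> W\<^sup>\<bottom>\<^sup>\<bottom>"
    using orth_proj_in[OF assms] orthogonal_comp_subset by auto
qed

lemma orthogonal_comp_has_unit_vector:
  fixes W :: "'a::euclidean_space set"
  assumes "subspace W" "W \<noteq> UNIV"
  obtains v where "v \<in> W\<^sup>\<bottom>" "norm v = 1"
proof -
  have "W\<^sup>\<bottom> \<noteq> {0}"
    using orthogonal_comp_self[OF assms(1)] assms(2) by force
  then obtain u where "u \<in> W\<^sup>\<bottom>" "u \<noteq> 0"
    using subspace_0[OF subspace_orthogonal_comp] by blast
  then show thesis
    by (intro that[of "u /\<^sub>R norm u"]) (simp_all add: subspace_scale subspace_orthogonal_comp)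
qed

lemma norm_add_eq_norm_diff_iff_orthogonal:
  fixes a b :: "'a::real_inner"
  shows "norm (a + b) = norm (a - b) \<longleftrightarrow> orthogonal a b"
proof -
  have "norm (a + b) = norm (a - b) \<longleftrightarrow> (norm (a + b))\<^sup>2 - (norm (a - b))\<^sup>2 = 0"
    by (metis eq_iff_diff_eq_0 norm_ge_zero power2_eq_iff_nonneg)
  also have "(norm (a + b))\<^sup>2 - (norm (a - b))\<^sup>2 = 4 * (a \<bullet> b)"
    by (simp add: power2_norm_eq_inner inner_add_left inner_add_right inner_diff_left
        inner_diff_right inner_commute[of b a])
  finally show ?thesis
    by (simp add: orthogonal_def)
qed

lemma norm_retrieval_pairD:
  assumes "norm_retrieval {1::nat, 2} (\<lambda>i. if i = 1 then U else V)"
    and "norm (orth_proj U x) = norm (orth_proj U y)" "norm (orth_proj V x) = norm (orth_proj V y)"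
  shows "norm x = norm y"
proof -
  have "\<forall>i\<in>{1::nat, 2}. norm (orth_proj (if i = 1 then U else V) x)
      = norm (orth_proj (if i = 1 then U else V) y)"
    using assms(2,3) by simp
  then show ?thesis
    using assms(1) unfolding norm_retrieval_def by blast
qed

lemma norm_retrieval_pairI:
  assumes "\<And>x y. norm (orth_proj U x) = norm (orth_proj U y) \<Longrightarrow>
      norm (orth_proj V x) = norm (orth_proj V y) \<Longrightarrow> norm x = norm y"
  shows "norm_retrieval {1::nat, 2} (\<lambda>i. if i = 1 then U else V)"
  unfolding norm_retrieval_def
proof (intro allI impI)
  fix x y
  assume "\<forall>i\<in>{1::nat, 2}. norm (orth_proj (if i = 1 then U else V) x)
      = norm (orth_proj (if i = 1 then U else V) y)"
  then have "norm (orth_proj U x) = norm (orth_proj U y)" "norm (orth_proj V x) = norm (orth_proj V y)"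
    by auto
  then show "norm x = norm y"
    by (rule assms)
qed

lemma norm_retrieval_pair_orthogonal_comps:
  fixes U V :: "'a::euclidean_space set"
  assumes "subspace U" "subspace V"
    and "norm_retrieval {1::nat, 2} (\<lambda>i. if i = 1 then U else V)"
    and "a \<in> U\<^sup>\<bottom>" "b \<in> V\<^sup>\<bottom>"
  shows "orthogonal a b"
proof -
  have "orth_proj U a = 0" "orth_proj V b = 0"
    using assms by (simp_all add: orth_proj_eq_0_iff)
  then have proj: "orth_proj U (a + b) = orth_proj U b" "orth_proj U (a - b) = - orth_proj U b"
    "orth_proj V (a + b) = orth_proj V a" "orth_proj V (a - b) = orth_proj V a"
    using linear_orth_proj[OF assms(1)] linear_orth_proj[OF assms(2)]
    by (simp_all add: linear_add linear_diff)
  have "norm (a + b) = norm (a - b)"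
    by (rule norm_retrieval_pairD[OF assms(3)]) (simp_all add: proj)
  then show ?thesis
    by (simp add: norm_add_eq_norm_diff_iff_orthogonal)
qed

lemma norm_retrieval_pair_imp_Pythagorean:
  fixes U V :: "'a::euclidean_space set"
  assumes "subspace U" "subspace V" "U \<noteq> UNIV" "V \<noteq> UNIV"
    and nr: "norm_retrieval {1::nat, 2} (\<lambda>i. if i = 1 then U else V)"
  shows "(norm x)\<^sup>2 = (norm (orth_proj U x))\<^sup>2 + (norm (orth_proj V x))\<^sup>2"
proof -
  let ?PU = "orth_proj U" and ?PV = "orth_proj V"
  obtain v where v: "v \<in> U\<^sup>\<bottom>" "norm v = 1"
    using orthogonal_comp_has_unit_vector[OF assms(1,3)] .
  obtain w where w: "w \<in> V\<^sup>\<bottom>" "norm w = 1"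
    using orthogonal_comp_has_unit_vector[OF assms(2,4)] .
  have "v \<in> V\<^sup>\<bottom>\<^sup>\<bottom>"
    unfolding orthogonal_comp_def[of "V\<^sup>\<bottom>"]
    using norm_retrieval_pair_orthogonal_comps[OF assms(1,2) nr v(1)] by (simp add: orthogonal_commute)
  moreover have "w \<in> U\<^sup>\<bottom>\<^sup>\<bottom>"
    unfolding orthogonal_comp_def[of "U\<^sup>\<bottom>"]
    using norm_retrieval_pair_orthogonal_comps[OF assms(1,2) nr _ w(1)] by simp
  ultimately have "v \<in> V" "w \<in> U"
    by (simp_all add: orthogonal_comp_self assms(1,2))
  define y where "y = norm (?PV x) *\<^sub>R v + norm (?PU x) *\<^sub>R w"
  have proj: "?PU y = norm (?PU x) *\<^sub>R w" "?PV y = norm (?PV x) *\<^sub>R v"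
    using linear_orth_proj[OF assms(1)] linear_orth_proj[OF assms(2)] v w \<open>v \<in> V\<close> \<open>w \<in> U\<close>
    by (simp_all add: y_def linear_add linear_scale orth_proj_eq_self orth_proj_eq_0_iff assms(1,2))
  have "norm x = norm y"
    by (rule norm_retrieval_pairD[OF nr]) (simp_all add: proj v(2) w(2))
  moreover have "(norm y)\<^sup>2 = (norm (?PV x))\<^sup>2 + (norm (?PU x))\<^sup>2"
    using norm_retrieval_pair_orthogonal_comps[OF assms(1,2) nr v(1) w(1)] v(2) w(2)
    by (simp add: y_def norm_add_Pythagorean orthogonal_clauses)
  ultimately show ?thesis
    by simp
qed

lemma norm_retrieval_pair_if_Pythagorean:
  assumes "\<And>x. (norm x)\<^sup>2 = (norm (orth_proj U x))\<^sup>2 + (norm (orth_proj V x))\<^sup>2"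
  shows "norm_retrieval {1::nat, 2} (\<lambda>i. if i = 1 then U else V)"
proof (rule norm_retrieval_pairI)
  fix x y
  assume "norm (orth_proj U x) = norm (orth_proj U y)" "norm (orth_proj V x) = norm (orth_proj V y)"
  then have "(norm x)\<^sup>2 = (norm y)\<^sup>2"
    using assms[of x] assms[of y] by simp
  then show "norm x = norm y"
    by (simp add: power2_eq_iff_nonneg)
qed

lemma orth_proj_Pythagorean_iff:
  fixes U V :: "'a::euclidean_space set"
  assumes U: "subspace U" and V: "subspace V"
  shows "(\<forall>x. (norm x)\<^sup>2 = (norm (orth_proj U x))\<^sup>2 + (norm (orth_proj V x))\<^sup>2) \<longleftrightarrow> V = U\<^sup>\<bottom>"
proof
  assume h: "\<forall>x. (norm x)\<^sup>2 = (norm (orth_proj U x))\<^sup>2 + (norm (orth_proj V x))\<^sup>2"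
  have "x \<in> U\<^sup>\<bottom>" if "x \<in> V" for x
    using h[rule_format, of x] orth_proj_eq_self[OF V that] orth_proj_eq_0_iff[OF U] by simp
  moreover have "x \<in> V" if "x \<in> U\<^sup>\<bottom>" for x
  proof -
    have "(norm x)\<^sup>2 = (norm (orth_proj V x))\<^sup>2"
      using h[rule_format, of x] that orth_proj_eq_0_iff[OF U] by simp
    then have "x = orth_proj V x"
      using norm_orth_proj_Pythagorean[OF V, of x] by simp
    then show ?thesis
      using orth_proj_in[OF V] by metis
  qed
  ultimately show "V = U\<^sup>\<bottom>"
    by blast
next
  assume "V = U\<^sup>\<bottom>"
  then show "\<forall>x. (norm x)\<^sup>2 = (norm (orth_proj U x))\<^sup>2 + (norm (orth_proj V x))\<^sup>2"
    using norm_orth_proj_Pythagorean[OF U] orth_proj_orthogonal_comp[OF U] by metis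
qed

theorem mainTheorem2:
  fixes W1 W2 :: "(real ^ 'n) set"
  assumes "subspace W1" and "subspace W2"
    and "W1 \<noteq> UNIV" and "W2 \<noteq> UNIV"
  shows "norm_retrieval {1::nat, 2} (\<lambda>i. if i = 1 then W1 else W2)
         \<longleftrightarrow> W2 = orthogonal_comp W1"
proof -
  have "norm_retrieval {1::nat, 2} (\<lambda>i. if i = 1 then W1 else W2) \<longleftrightarrow>
      (\<forall>x. (norm x)\<^sup>2 = (norm (orth_proj W1 x))\<^sup>2 + (norm (orth_proj W2 x))\<^sup>2)"
    using norm_retrieval_pair_imp_Pythagorean[OF assms] norm_retrieval_pair_if_Pythagorean
    by blast
  also have "\<dots> \<longleftrightarrow> W2 = orthogonal_comp W1"
    by (rule orth_proj_Pythagorean_iff[OF assms(1,2)])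
  finally show ?thesis .
qed

end
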